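(* Let $A=\langle a,b\mid\ \rangle$ and $B=\langle c,d\mid\ \rangle$ be free groups of rank two, $C\le A$ the subgroup generated by $\{a,\ a^{b^2}(a^b)^{-1}a\}$ and $D\le B$ the subgroup generated by $\{c^{-1},\ c^{d^2}(c^d)^{-1}c\}$. Then for every $\alpha\in C\setminus\{1\}$, $\mathrm{NSS}_A(\{\alpha\})\cap C=\mathrm{NSS}_C(\{\alpha\})$, and for every $\beta\in D\setminus\{1\}$, $\mathrm{NSS}_B(\{\beta\})\cap D=\mathrm{NSS}_D(\{\beta\})$.
   Context: Notation $x^y=y^{-1}xy$. For a subset $S$ of a group $H$, $\mathrm{NSS}_H(S)=\{s_1^{h_1}\cdots s_n^{h_n}: n\ge1,\ s_i\in S,\ h_i\in H\}$. *)

theory Defs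
  imports "HOL-Algebra.Group" "HOL-Algebra.Generated_Groups"
begin

(* Free group on a generator type 'g: elements are freely reduced words over
   letters (inverted?, generator); multiplication = concatenation followed by
   free reduction; identity = empty word. *)

type_synonym 'g letter = "bool \<times> 'g"

definition inv_letter :: "'g letter \<Rightarrow> 'g letter" where
  "inv_letter x = (\<not> fst x, snd x)"

fun reduced :: "'g letter list \<Rightarrow> bool" where
  "reduced [] = True"
| "reduced [x] = True"
| "reduced (x # y # xs) = (y \<noteq> inv_letter x \<and> reduced (y # xs))"

definition reduce :: "'g letter list \<Rightarrow> 'g letter list" where
  "reduce xs = foldr (\<lambda>x acc. case acc of [] \<Rightarrow> [x]
                     | y # ys \<Rightarrow> (if y = inv_letter x then ys else x # y # ys)) xs []"

definition free_group :: "('g letter list) monoid" where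
  "free_group = \<lparr> carrier = {w. reduced w}, mult = (\<lambda>x y. reduce (x @ y)), one = [] \<rparr>"

definition gen :: "'g \<Rightarrow> 'g letter list" where
  "gen g = [(False, g)]"

definition conjg :: "('a, 'b) monoid_scheme \<Rightarrow> 'a \<Rightarrow> 'a \<Rightarrow> 'a" where
  "conjg G x y = inv\<^bsub>G\<^esub> y \<otimes>\<^bsub>G\<^esub> x \<otimes>\<^bsub>G\<^esub> y"

fun mprod :: "('a, 'b) monoid_scheme \<Rightarrow> 'a list \<Rightarrow> 'a" where
  "mprod G [] = \<one>\<^bsub>G\<^esub>"
| "mprod G (x # xs) = x \<otimes>\<^bsub>G\<^esub> mprod G xs"

(* NSS_H(S) = { s_1^{h_1} ... s_n^{h_n} : n \<ge> 1, s_i \<in> S, h_i \<in> H },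
   computed in the ambient group G (H is a subgroup of G, given by its carrier) *)
definition NSS :: "('a, 'b) monoid_scheme \<Rightarrow> 'a set \<Rightarrow> 'a set \<Rightarrow> 'a set" where
  "NSS G H S = {mprod G (map (\<lambda>(s, h). conjg G s h) ps) | ps.
                  ps \<noteq> [] \<and> set ps \<subseteq> S \<times> H}"

datatype genAB = a | b
datatype genCD = c | d

abbreviation FA :: "genAB letter list monoid" where "FA \<equiv> free_group"
abbreviation FB :: "genCD letter list monoid" where "FB \<equiv> free_group"

definition subC :: "genAB letter list set" where
  "subC = generate FA {gen a,
      conjg FA (gen a) (gen b \<otimes>\<^bsub>FA\<^esub> gen b) \<otimes>\<^bsub>FA\<^esub> inv\<^bsub>FA\<^esub> (conjg FA (gen a) (gen b))
        \<otimes>\<^bsub>FA\<^esub> gen a}"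

definition subD :: "genCD letter list set" where
  "subD = generate FB {inv\<^bsub>FB\<^esub> (gen c),
      conjg FB (gen c) (gen d \<otimes>\<^bsub>FB\<^esub> gen d) \<otimes>\<^bsub>FB\<^esub> inv\<^bsub>FB\<^esub> (conjg FB (gen c) (gen d))
        \<otimes>\<^bsub>FB\<^esub> gen c}"

end

theory Submission
  imports Defs "HOL-Algebra.Elementary_Groups"
begin

(* Let F be free on u, v and put x = u, y = x^(v^2) (x^v)^-1 x and C = <x, y>; the subgroup D is
   C for the generators c, d, since inverting a generator does not change the generated subgroup.
   In the unrestricted wreath product (F \<times> \<int>) \<wr> \<int>, send v to the translation by 1 and x to the
   function with values (x, 1) at 0 and (y x^-1, 0) at -2.  The image of g \<in> C is untranslated, has
   F-coordinate g at 0, and its \<int>-coordinates are the coefficients of (m + n) - n t + n t^2 for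
   some m, n; moreover every F-coordinate of every image lies in C.  Conjugation by h multiplies the
   \<int>-part by t^k, k the translation of h.  So if a product of conjugates of \<alpha> \<in> C lies in C, its
   \<int>-part gives c(t) p(t) = q(t) with c(t) = \<Sum> t^k, and as c has nonnegative coefficients and p, q
   have this special shape, every k vanishes unless p = 0, in which case conjugates with k \<noteq> 0 are
   trivial at 0.  Reading off the F-coordinate at 0 rewrites the product as a product of conjugates
   of \<alpha> by the 0-coordinates of the conjugators, which lie in C. *)

section \<open>The free group\<close>

definition reduce_step :: "'g letter \<Rightarrow> 'g letter list \<Rightarrow> 'g letter list" where
  "reduce_step x w =
     (case w of [] \<Rightarrow> [x] | y # ys \<Rightarrow> (if y = inv_letter x then ys else x # y # ys))"

lemma reduce_Nil [simp]: "reduce [] = []"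
  by (simp add: reduce_def)

lemma reduce_Cons [simp]: "reduce (x # xs) = reduce_step x (reduce xs)"
  by (simp add: reduce_def reduce_step_def)

lemma reduce_append: "reduce (xs @ ys) = foldr reduce_step xs (reduce ys)"
  by (induct xs) auto

lemma inv_letter_inv_letter [simp]: "inv_letter (inv_letter x) = x"
  by (simp add: inv_letter_def)

lemma reduced_Cons_tl: "reduced (y # ys) \<Longrightarrow> reduced ys"
  by (cases ys) auto

lemma reduced_reduce_step: "reduced w \<Longrightarrow> reduced (reduce_step x w)"
  by (cases w) (auto simp: reduce_step_def dest: reduced_Cons_tl)

lemma reduced_reduce: "reduced (reduce xs)"
  by (induct xs) (auto intro: reduced_reduce_step)

lemma reduce_reduced: "reduced w \<Longrightarrow> reduce w = w"
  by (induct w rule: reduced.induct) (auto simp: reduce_step_def)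

lemma reduce_step_inv_letter: "reduced w \<Longrightarrow> reduce_step x (reduce_step (inv_letter x) w) = w"
  by (cases w; cases "hd w = x"; cases "tl w") (auto simp: reduce_step_def)

lemma reduce_reduce_step_append:
  assumes "reduced w"
  shows "reduce (reduce_step x w @ ys) = reduce_step x (reduce (w @ ys))"
proof (cases w)
  case (Cons y ws)
  then show ?thesis
    using reduce_step_inv_letter[OF reduced_reduce, of x "ws @ ys"]
    by (cases "y = inv_letter x") (auto simp: reduce_step_def)
qed (simp add: reduce_step_def)

lemma reduce_reduce_append: "reduce (reduce xs @ ys) = reduce (xs @ ys)"
  by (induct xs) (auto simp: reduce_reduce_step_append reduced_reduce)

lemma reduce_append_reduce: "reduce (xs @ reduce ys) = reduce (xs @ ys)"
  by (simp add: reduce_append reduce_reduced reduced_reduce)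

definition word_inv :: "'g letter list \<Rightarrow> 'g letter list" where
  "word_inv w = rev (map inv_letter w)"

lemma reduce_word_inv_append: "reduce (word_inv w @ w) = []"
proof (induct w)
  case (Cons x w)
  have "reduce ([inv_letter x, x] @ w) = reduce w"
    using reduce_step_inv_letter[OF reduced_reduce, of "inv_letter x" w] by simp
  then have "reduce (word_inv w @ [inv_letter x, x] @ w) = reduce (word_inv w @ w)"
    by (metis reduce_append)
  then show ?case
    using Cons by (simp add: word_inv_def)
qed (simp add: word_inv_def)

lemma group_free_group: "group (free_group :: 'g letter list monoid)"
proof (rule groupI)
  fix x y z :: "'g letter list"
  show "x \<otimes>\<^bsub>free_group\<^esub> y \<in> carrier free_group"
    by (simp add: free_group_def reduced_reduce)
  show "x \<otimes>\<^bsub>free_group\<^esub> y \<otimes>\<^bsub>free_group\<^esub> z = x \<otimes>\<^bsub>free_group\<^esub> (y \<otimes>\<^bsub>free_group\<^esub> z)"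
    by (simp add: free_group_def reduce_reduce_append reduce_append_reduce)
next
  show "\<one>\<^bsub>free_group\<^esub> \<in> carrier (free_group :: 'g letter list monoid)"
    by (simp add: free_group_def)
next
  fix x :: "'g letter list"
  assume x: "x \<in> carrier free_group"
  then show "\<one>\<^bsub>free_group\<^esub> \<otimes>\<^bsub>free_group\<^esub> x = x"
    by (simp add: free_group_def reduce_reduced)
  show "\<exists>y\<in>carrier free_group. y \<otimes>\<^bsub>free_group\<^esub> x = \<one>\<^bsub>free_group\<^esub>"
    using x by (intro bexI[of _ "reduce (word_inv x)"])
      (auto simp: free_group_def reduce_word_inv_append reduced_reduce reduce_reduce_append)
qed

lemma gen_in_free_group [simp]: "gen g \<in> carrier free_group"
  by (simp add: gen_def free_group_def)

definition letter_eval :: "('h, 'c) monoid_scheme \<Rightarrow> ('g \<Rightarrow> 'h) \<Rightarrow> 'g letter \<Rightarrow> 'h" where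
  "letter_eval H f x = (if fst x then inv\<^bsub>H\<^esub> (f (snd x)) else f (snd x))"

definition word_eval :: "('h, 'c) monoid_scheme \<Rightarrow> ('g \<Rightarrow> 'h) \<Rightarrow> 'g letter list \<Rightarrow> 'h" where
  "word_eval H f w = mprod H (map (letter_eval H f) w)"

context group
begin

lemma word_eval_Nil [simp]: "word_eval G f [] = \<one>"
  by (simp add: word_eval_def)

lemma word_eval_Cons [simp]: "word_eval G f (x # w) = letter_eval G f x \<otimes> word_eval G f w"
  by (simp add: word_eval_def)

context
  fixes f :: "'g \<Rightarrow> 'a"
  assumes f_closed: "\<And>g. f g \<in> carrier G"
begin

lemma letter_eval_closed [simp]: "letter_eval G f x \<in> carrier G"
  by (simp add: letter_eval_def f_closed)

lemma word_eval_closed [simp]: "word_eval G f w \<in> carrier G"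
  by (induct w) simp_all

lemma word_eval_append: "word_eval G f (v @ w) = word_eval G f v \<otimes> word_eval G f w"
proof (induct v)
  case (Cons x v)
  then show ?case
    by (simp add: m_assoc)
qed simp

lemma word_eval_reduce_step:
  "word_eval G f (reduce_step x w) = letter_eval G f x \<otimes> word_eval G f w"
proof (cases w)
  case (Cons y ys)
  have "letter_eval G f (inv_letter x) = inv (letter_eval G f x)"
    by (simp add: letter_eval_def inv_letter_def f_closed)
  with Cons show ?thesis
    by (cases "y = inv_letter x") (simp_all add: reduce_step_def m_assoc[symmetric])
qed (simp add: reduce_step_def)

lemma word_eval_reduce: "word_eval G f (reduce w) = word_eval G f w"
  by (induct w) (simp_all add: word_eval_reduce_step)

lemma group_hom_word_eval: "group_hom free_group G (word_eval G f)"
proof -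
  have "word_eval G f \<in> hom free_group G"
    by (rule homI) (simp_all add: free_group_def word_eval_reduce word_eval_append)
  then show ?thesis
    by (simp add: group_hom_def group_hom_axioms_def group_free_group is_group)
qed

lemma word_eval_gen: "word_eval G f (gen g) = f g"
  by (simp add: gen_def letter_eval_def f_closed)

end

end

section \<open>Products of conjugates\<close>

abbreviation conj_prod :: "('a, 'b) monoid_scheme \<Rightarrow> 'a \<Rightarrow> 'a list \<Rightarrow> 'a" where
  "conj_prod G \<alpha> hs \<equiv> mprod G (map (conjg G \<alpha>) hs)"

context group
begin

lemma mprod_closed: "set xs \<subseteq> carrier G \<Longrightarrow> mprod G xs \<in> carrier G"
  by (induct xs) auto

lemma conjg_closed: "x \<in> carrier G \<Longrightarrow> y \<in> carrier G \<Longrightarrow> conjg G x y \<in> carrier G"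
  by (simp add: conjg_def)

lemma conjg_one: "y \<in> carrier G \<Longrightarrow> conjg G \<one> y = \<one>"
  by (simp add: conjg_def)

lemma m_inv_cancel_left: "g \<in> carrier G \<Longrightarrow> w \<in> carrier G \<Longrightarrow> g \<otimes> (inv g \<otimes> w) = w"
  by (simp add: m_assoc[symmetric])

lemma conjg_mult:
  "\<lbrakk>x \<in> carrier G; y \<in> carrier G; g \<in> carrier G\<rbrakk> \<Longrightarrow> conjg G (x \<otimes> y) g = conjg G x g \<otimes> conjg G y g"
  by (simp add: conjg_def m_assoc m_inv_cancel_left)

lemma conjg_conjg:
  "\<lbrakk>x \<in> carrier G; h \<in> carrier G; g \<in> carrier G\<rbrakk> \<Longrightarrow> conjg G (conjg G x h) g = conjg G x (h \<otimes> g)"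
  by (simp add: conjg_def inv_mult_group m_assoc)

lemma conj_prod_closed: "\<alpha> \<in> carrier G \<Longrightarrow> set hs \<subseteq> carrier G \<Longrightarrow> conj_prod G \<alpha> hs \<in> carrier G"
  by (auto intro!: mprod_closed conjg_closed)

lemma conj_prod_mult_right:
  assumes "\<alpha> \<in> carrier G" "set hs \<subseteq> carrier G" "g \<in> carrier G"
  shows "conj_prod G \<alpha> (map (\<lambda>h. h \<otimes> g) hs) = conjg G (conj_prod G \<alpha> hs) g"
  using assms(2)
  by (induct hs) (auto simp: assms(1,3) conjg_one conjg_mult conjg_conjg conj_prod_closed conjg_closed)

lemma conj_prod_trivial_conjugator:
  assumes "\<alpha> \<in> carrier G" "set hs \<subseteq> carrier G" "hs \<noteq> []"
  obtains hs' g where "set hs' \<subseteq> carrier G" "\<one> \<in> set hs'" "g \<in> carrier G"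
    "conj_prod G \<alpha> hs' = conjg G (conj_prod G \<alpha> hs) g"
proof -
  define g where "g = inv (hd hs)"
  have "hd hs \<in> set hs"
    using assms(3) by simp
  with assms(2) have hd: "hd hs \<in> carrier G"
    by blast
  show thesis
  proof (rule that[of "map (\<lambda>h. h \<otimes> g) hs" g])
    show "set (map (\<lambda>h. h \<otimes> g) hs) \<subseteq> carrier G" "g \<in> carrier G"
      using assms(2) hd by (auto simp: g_def)
    show "\<one> \<in> set (map (\<lambda>h. h \<otimes> g) hs)"
      using \<open>hd hs \<in> set hs\<close> hd by (auto simp: g_def intro!: rev_image_eqI[of "hd hs"])
    show "conj_prod G \<alpha> (map (\<lambda>h. h \<otimes> g) hs) = conjg G (conj_prod G \<alpha> hs) g"
      using conj_prod_mult_right[OF assms(1,2), of g] hd by (simp add: g_def)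
  qed
qed

lemma mprod_map_if_one:
  "(\<And>x. x \<in> set xs \<Longrightarrow> f x \<in> carrier G) \<Longrightarrow>
   mprod G (map (\<lambda>x. if P x then f x else \<one>) xs) = mprod G (map f (filter P xs))"
proof (induct xs)
  case (Cons x xs)
  have "mprod G (map f (filter P xs)) \<in> carrier G"
    using Cons.prems by (intro mprod_closed) auto
  with Cons show ?case
    by auto
qed simp

lemma NSS_subset_subgroup:
  assumes "subgroup H G" "S \<subseteq> H"
  shows "NSS G H S \<subseteq> H"
proof -
  have "mprod G (map (\<lambda>(s, h). conjg G s h) ps) \<in> H" if "set ps \<subseteq> S \<times> H" for ps
    using that assms
    by (induct ps)
      (auto simp: conjg_def subgroup.one_closed intro!: subgroup.m_closed subgroup.m_inv_closed)
  then show ?thesis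
    unfolding NSS_def by blast
qed

end

lemma NSS_singleton: "NSS G H {\<alpha>} = {conj_prod G \<alpha> hs | hs. hs \<noteq> [] \<and> set hs \<subseteq> H}"
proof (intro equalityI subsetI)
  fix x
  assume "x \<in> NSS G H {\<alpha>}"
  then obtain ps where ps: "x = mprod G (map (\<lambda>(s, h). conjg G s h) ps)"
    and "ps \<noteq> []" "set ps \<subseteq> {\<alpha>} \<times> H"
    by (auto simp: NSS_def)
  have "map (\<lambda>(s, h). conjg G s h) ps = map (conjg G \<alpha>) (map snd ps)"
    using \<open>set ps \<subseteq> {\<alpha>} \<times> H\<close> by (induct ps) auto
  with ps \<open>ps \<noteq> []\<close> \<open>set ps \<subseteq> {\<alpha>} \<times> H\<close> show "x \<in> {conj_prod G \<alpha> hs | hs. hs \<noteq> [] \<and> set hs \<subseteq> H}"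
    by (intro CollectI exI[of _ "map snd ps"]) auto
next
  fix x
  assume "x \<in> {conj_prod G \<alpha> hs | hs. hs \<noteq> [] \<and> set hs \<subseteq> H}"
  then obtain hs where hs: "x = conj_prod G \<alpha> hs" "hs \<noteq> []" "set hs \<subseteq> H"
    by blast
  then show "x \<in> NSS G H {\<alpha>}"
    unfolding NSS_def by (intro CollectI exI[of _ "map (Pair \<alpha>) hs"]) (auto simp: comp_def)
qed

lemma NSS_mono: "H \<subseteq> H' \<Longrightarrow> NSS G H S \<subseteq> NSS G H' S"
  unfolding NSS_def by blast

lemma (in group_hom) hom_mprod: "set xs \<subseteq> carrier G \<Longrightarrow> h (mprod G xs) = mprod H (map h xs)"
  by (induct xs) (auto simp: G.mprod_closed)

lemma (in group_hom) hom_conj_prod: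
  assumes \<alpha>: "\<alpha> \<in> carrier G" and hs: "set hs \<subseteq> carrier G"
  shows "h (conj_prod G \<alpha> hs) = conj_prod H (h \<alpha>) (map h hs)"
proof -
  have "h (conj_prod G \<alpha> hs) = mprod H (map h (map (conjg G \<alpha>) hs))"
    using \<alpha> hs by (intro hom_mprod) (auto intro: G.conjg_closed)
  also have "map h (map (conjg G \<alpha>) hs) = map (conjg H (h \<alpha>)) (map h hs)"
    using \<alpha> hs by (auto simp: conjg_def)
  finally show ?thesis .
qed

lemma mprod_DirProd: "mprod (G \<times>\<times> H) xs = (mprod G (map fst xs), mprod H (map snd xs))"
  by (induct xs) (auto simp: mult_DirProd')

lemma mprod_integer_group: "mprod integer_group ks = sum_list ks"
  by (induct ks) auto

section \<open>The wreath product with \<int>\<close>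

definition wreath :: "('a, 'b) monoid_scheme \<Rightarrow> (int \<times> (int \<Rightarrow> 'a)) monoid" where
  "wreath G = \<lparr>carrier = {p. \<forall>j. snd p j \<in> carrier G},
     mult = (\<lambda>p q. (fst p + fst q, \<lambda>j. snd p j \<otimes>\<^bsub>G\<^esub> snd q (j + fst p))),
     one = (0, \<lambda>j. \<one>\<^bsub>G\<^esub>)\<rparr>"

lemma wreath_mult: "p \<otimes>\<^bsub>wreath G\<^esub> q = (fst p + fst q, \<lambda>j. snd p j \<otimes>\<^bsub>G\<^esub> snd q (j + fst p))"
  by (simp add: wreath_def)

lemma wreath_one: "\<one>\<^bsub>wreath G\<^esub> = (0, \<lambda>j. \<one>\<^bsub>G\<^esub>)"
  by (simp add: wreath_def)

lemma wreath_carrier: "p \<in> carrier (wreath G) \<longleftrightarrow> (\<forall>j. snd p j \<in> carrier G)"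
  by (simp add: wreath_def)

context group
begin

lemma group_wreath: "group (wreath G)"
proof (rule groupI)
  fix p q r
  assume "p \<in> carrier (wreath G)" "q \<in> carrier (wreath G)" "r \<in> carrier (wreath G)"
  then show "p \<otimes>\<^bsub>wreath G\<^esub> q \<in> carrier (wreath G)"
    and "p \<otimes>\<^bsub>wreath G\<^esub> q \<otimes>\<^bsub>wreath G\<^esub> r = p \<otimes>\<^bsub>wreath G\<^esub> (q \<otimes>\<^bsub>wreath G\<^esub> r)"
    by (simp_all add: wreath_mult wreath_carrier m_assoc ac_simps)
next
  fix p
  assume p: "p \<in> carrier (wreath G)"
  then show "\<one>\<^bsub>wreath G\<^esub> \<otimes>\<^bsub>wreath G\<^esub> p = p"
    by (simp add: wreath_one wreath_mult wreath_carrier)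
  show "\<exists>q\<in>carrier (wreath G). q \<otimes>\<^bsub>wreath G\<^esub> p = \<one>\<^bsub>wreath G\<^esub>"
    using p by (intro bexI[of _ "(- fst p, \<lambda>j. inv (snd p (j - fst p)))"])
      (auto simp: wreath_one wreath_mult wreath_carrier)
qed (simp add: wreath_one wreath_carrier)

lemma wreath_inv:
  "p \<in> carrier (wreath G) \<Longrightarrow> inv\<^bsub>wreath G\<^esub> p = (- fst p, \<lambda>j. inv (snd p (j - fst p)))"
  by (intro group.inv_equality[OF group_wreath]) (auto simp: wreath_one wreath_mult wreath_carrier)

lemma wreath_mult_untranslated: "(0, \<phi>) \<otimes>\<^bsub>wreath G\<^esub> (0, \<psi>) = (0, \<lambda>j. \<phi> j \<otimes> \<psi> j)"
  by (simp add: wreath_mult)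

lemma wreath_inv_untranslated:
  "(\<And>j. \<phi> j \<in> carrier G) \<Longrightarrow> inv\<^bsub>wreath G\<^esub> (0, \<phi>) = (0, \<lambda>j. inv \<phi> j)"
  by (simp add: wreath_inv wreath_carrier)

lemma wreath_conj_prod_untranslated:
  assumes "\<And>j. \<phi> j \<in> carrier G" "set qs \<subseteq> carrier (wreath G)"
  shows "conj_prod (wreath G) (0, \<phi>) qs =
    (0, \<lambda>j. mprod G (map (\<lambda>q. conjg G (\<phi> (j - fst q)) (snd q (j - fst q))) qs))"
  using assms(2)
  by (induct qs) (auto simp: wreath_one wreath_mult wreath_inv wreath_carrier conjg_def assms(1))

end

section \<open>A convolution identity forcing concentration in degree 0\<close>

definition weight :: "int \<Rightarrow> int \<Rightarrow> int \<Rightarrow> int" where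
  "weight m n j = (if j = 0 then m + n else if j = 1 then - n else if j = 2 then n else 0)"

lemma weight_uminus: "weight (- m) (- n) j = - weight m n j"
  by (simp add: weight_def)

lemma finite_support_extremes:
  fixes f :: "int \<Rightarrow> 'a::zero"
  assumes "finite {j. f j \<noteq> 0}" "f k \<noteq> 0"
  obtains L K where "L \<le> k" "k \<le> K" "f K \<noteq> 0" "f L \<noteq> 0"
    "\<And>j. K < j \<Longrightarrow> f j = 0" "\<And>j. j < L \<Longrightarrow> f j = 0"
proof
  let ?S = "{j. f j \<noteq> 0}"
  have k: "k \<in> ?S" and nonempty: "?S \<noteq> {}"
    using assms(2) by auto
  show "Min ?S \<le> k" "k \<le> Max ?S"
    using Min_le[OF assms(1) k] Max_ge[OF assms(1) k] .
  show "f (Max ?S) \<noteq> 0" "f (Min ?S) \<noteq> 0"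
    using Max_in[OF assms(1) nonempty] Min_in[OF assms(1) nonempty] by simp_all
  show "f j = 0" if "Max ?S < j" for j
    using Max_ge[OF assms(1), of j] that by force
  show "f j = 0" if "j < Min ?S" for j
    using Min_le[OF assms(1), of j] that by force
qed

lemma weight_recurrence_concentrated:
  fixes cnt :: "int \<Rightarrow> int"
  assumes mn: "(m, n) \<noteq> (0, 0)" and fin: "finite {j. cnt j \<noteq> 0}" and nonneg: "\<And>j. cnt j \<ge> 0"
    and rec: "\<And>j. (m + n) * cnt j - n * cnt (j - 1) + n * cnt (j - 2) = weight m' n' j"
    and "k \<noteq> 0"
  shows "cnt k = 0"
proof (rule ccontr)
  assume "cnt k \<noteq> 0"
  have off: "(m + n) * cnt j - n * cnt (j - 1) + n * cnt (j - 2) = 0" if "j \<notin> {0, 1, 2}" for j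
    using rec[of j] that by (simp add: weight_def)
  have one_two: "(m + n) * (cnt 1 + cnt 2) - n * cnt 1 + n * cnt (-1) = 0"
    using rec[of 1] rec[of 2] by (simp add: weight_def algebra_simps)
  obtain L K where KL: "L \<le> k" "k \<le> K" "cnt K \<noteq> 0" "cnt L \<noteq> 0"
    and above: "\<And>j. K < j \<Longrightarrow> cnt j = 0" and below: "\<And>j. j < L \<Longrightarrow> cnt j = 0"
    using finite_support_extremes[OF fin \<open>cnt k \<noteq> 0\<close>] by metis
  show False
  proof (cases "n = 0")
    case True
    with mn one_two nonneg[of 1] nonneg[of 2] have "m \<noteq> 0" "cnt 1 = 0" "cnt 2 = 0"
      by simp_all
    with True off[of k] \<open>k \<noteq> 0\<close> \<open>cnt k \<noteq> 0\<close> show False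
      by (cases "k = 1 \<or> k = 2") auto
  next
    case False
    txt \<open>At the top of the support the recurrence at \<open>K + 2\<close> leaves only \<open>n * cnt K\<close>.\<close>
    have "K \<le> 0"
    proof (rule ccontr)
      assume "\<not> K \<le> 0"
      then have "(m + n) * cnt (K + 2) - n * cnt (K + 2 - 1) + n * cnt (K + 2 - 2) = 0"
        by (intro off) auto
      moreover have "K + 2 - 1 = K + 1" "K + 2 - 2 = K"
        by simp_all
      ultimately show False
        using above[of "K + 1"] above[of "K + 2"] False KL(3) by simp
    qed
    show False
    proof (cases "m + n = 0")
      case False
      have "L \<ge> 0"
        using off[of L] below[of "L - 1"] below[of "L - 2"] False KL(4) by (cases "L \<ge> 0") auto
      with KL \<open>K \<le> 0\<close> \<open>k \<noteq> 0\<close> show False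
        by simp
    next
      case True
      have "L \<ge> -1"
        using off[of "L + 1"] below[of "L - 1"] True \<open>n \<noteq> 0\<close> KL(4) by (cases "L \<ge> -1") auto
      moreover have "L \<noteq> -1"
        using one_two True above[of 1] above[of 2] \<open>K \<le> 0\<close> \<open>n \<noteq> 0\<close> KL(4) by auto
      ultimately show False
        using KL \<open>K \<le> 0\<close> \<open>k \<noteq> 0\<close> by simp
    qed
  qed
qed

lemma shifted_weights_concentrated:
  fixes ks :: "int list"
  assumes "(m, n) \<noteq> (0, 0)" and "\<And>j. (\<Sum>k\<leftarrow>ks. weight m n (j - k)) = weight m' n' j"
    and "k \<in> set ks"
  shows "k = 0"
proof -
  define cnt where "cnt j = int (count_list ks j)" for j
  have "(\<Sum>k\<leftarrow>ks. weight m n (j - k)) = (m + n) * cnt j - n * cnt (j - 1) + n * cnt (j - 2)" for j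
    unfolding cnt_def by (induct ks) (auto simp: weight_def algebra_simps)
  moreover have "{j. cnt j \<noteq> 0} \<subseteq> set ks"
    by (auto simp: cnt_def count_list_0_iff)
  ultimately have "cnt j = 0" if "j \<noteq> 0" for j
    using weight_recurrence_concentrated[of m n cnt m' n' j] assms(1,2) that
    by (auto simp: cnt_def intro: finite_subset)
  then show ?thesis
    using assms(3) by (auto simp: cnt_def count_list_0_iff)
qed

section \<open>The embedding into the wreath product\<close>

locale two_generators =
  fixes u v :: 'g
  assumes distinct_generators: "u \<noteq> v"
begin

abbreviation F :: "'g letter list monoid" where "F \<equiv> free_group"
abbreviation FZ :: "('g letter list \<times> int) monoid" where "FZ \<equiv> F \<times>\<times> integer_group"
abbreviation W :: "(int \<times> (int \<Rightarrow> 'g letter list \<times> int)) monoid" where "W \<equiv> wreath FZ"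

interpretation F: group F by (rule group_free_group)
interpretation FZ: group FZ by (simp add: DirProd_group group_free_group)
interpretation W: group W by (rule FZ.group_wreath)

definition "gx = gen u"
definition "gt = gen v"
definition "gy = conjg F gx (gt \<otimes>\<^bsub>F\<^esub> gt) \<otimes>\<^bsub>F\<^esub> inv\<^bsub>F\<^esub> (conjg F gx gt) \<otimes>\<^bsub>F\<^esub> gx"
definition "gz = gy \<otimes>\<^bsub>F\<^esub> inv\<^bsub>F\<^esub> gx"
definition "C = generate F {gx, gy}"

lemma gx_carrier [simp]: "gx \<in> carrier F" and gt_carrier [simp]: "gt \<in> carrier F"
  and gy_carrier [simp]: "gy \<in> carrier F" and gz_carrier [simp]: "gz \<in> carrier F"
  by (simp_all add: gx_def gt_def gy_def gz_def conjg_def)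

lemma subgroup_C: "subgroup C F"
  unfolding C_def by (rule F.generate_is_subgroup) simp

lemma C_subset_carrier: "C \<subseteq> carrier F"
  using subgroup_C subgroup.subset by blast

lemma gx_in_C [simp]: "gx \<in> C" and gz_in_C [simp]: "gz \<in> C"
  by (simp_all add: C_def generate.incl gz_def subgroup.m_closed subgroup.m_inv_closed
      subgroup_C[unfolded C_def])

definition gx_coords :: "int \<Rightarrow> 'g letter list \<times> int" where
  "gx_coords j = (if j = 0 then (gx, 1) else if j = -2 then (gz, 0) else (\<one>\<^bsub>F\<^esub>, 0))"

definition psi_gen :: "'g \<Rightarrow> int \<times> (int \<Rightarrow> 'g letter list \<times> int)" where
  "psi_gen g = (if g = u then (0, gx_coords) else if g = v then (1, \<lambda>j. (\<one>\<^bsub>F\<^esub>, 0)) else \<one>\<^bsub>W\<^esub>)"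

definition "psi = word_eval W psi_gen"

definition "shift h = fst (psi h)"
definition "coord h j = fst (snd (psi h) j)"

lemma psi_gen_carrier: "psi_gen g \<in> carrier W"
  using distinct_generators by (auto simp: psi_gen_def gx_coords_def wreath_carrier wreath_one)

lemma group_hom_psi: "group_hom F W psi"
  unfolding psi_def by (rule W.group_hom_word_eval) (rule psi_gen_carrier)

interpretation psi: group_hom F W psi
  by (rule group_hom_psi)

lemma psi_carrier: "psi w \<in> carrier W"
  unfolding psi_def by (rule W.word_eval_closed) (rule psi_gen_carrier)

lemma coord_carrier: "coord h j \<in> carrier F"
  using psi_carrier[of h] by (auto simp: coord_def wreath_carrier mem_Times_iff)

lemma psi_gx: "psi gx = (0, gx_coords)"
  by (simp add: psi_def gx_def W.word_eval_gen[OF psi_gen_carrier] psi_gen_def)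

lemma psi_gt: "psi gt = (1, \<lambda>j. (\<one>\<^bsub>F\<^esub>, 0))"
  using distinct_generators
  by (simp add: psi_def gt_def W.word_eval_gen[OF psi_gen_carrier] psi_gen_def)

lemma inv_FZ: "fst p \<in> carrier F \<Longrightarrow> inv\<^bsub>FZ\<^esub> p = (inv\<^bsub>F\<^esub> (fst p), - snd p)"
  by (cases p) (simp add: group_free_group)

lemma conjg_FZ:
  "g \<in> carrier F \<Longrightarrow> fst p \<in> carrier F \<Longrightarrow> conjg FZ (g, k) p = (conjg F g (fst p), k)"
  by (cases p) (simp add: conjg_def group_free_group)

lemma coord_in_C: "coord w j \<in> C"
proof -
  let ?C_valued = "\<lambda>p. \<forall>j. fst (snd p j) \<in> C"
  have gen: "?C_valued (psi_gen g)" for g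
    using distinct_generators
    by (auto simp: psi_gen_def gx_coords_def wreath_one subgroup.one_closed[OF subgroup_C])
  have "fst (snd (psi_gen g) j) \<in> carrier F" for g j
    using psi_gen_carrier[of g] by (auto simp: wreath_carrier mem_Times_iff)
  then have letter: "?C_valued (letter_eval W psi_gen x)" for x
    using gen psi_gen_carrier
    by (auto simp: letter_eval_def FZ.wreath_inv inv_FZ subgroup.m_inv_closed[OF subgroup_C])
  have "?C_valued (psi w)"
  proof (induct w)
    case Nil
    then show ?case
      by (simp add: psi_def wreath_one subgroup.one_closed[OF subgroup_C])
  next
    case (Cons x w)
    then show ?case
      using letter[of x]
      by (auto simp: psi_def W.word_eval_Cons wreath_mult mult_DirProd'
          intro: subgroup.m_closed[OF subgroup_C])
  qed
  then show ?thesis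
    by (simp add: coord_def)
qed

definition C_coord :: "'g letter list \<Rightarrow> int \<Rightarrow> int \<Rightarrow> int \<Rightarrow> 'g letter list" where
  "C_coord g m n j =
    (if j = 0 then g else if j = 1 then gx [^]\<^bsub>F\<^esub> (- n) else if j = 2 then gx [^]\<^bsub>F\<^esub> n
     else if j = -1 then gz [^]\<^bsub>F\<^esub> (- n) else if j = -2 then gz [^]\<^bsub>F\<^esub> (m + n) else \<one>\<^bsub>F\<^esub>)"

definition C_image :: "'g letter list \<Rightarrow> int \<Rightarrow> int \<Rightarrow> int \<times> (int \<Rightarrow> 'g letter list \<times> int)" where
  "C_image g m n = (0, \<lambda>j. (C_coord g m n j, weight m n j))"

lemma C_coord_carrier: "g \<in> carrier F \<Longrightarrow> C_coord g m n j \<in> carrier F"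
  by (simp add: C_coord_def)

lemma psi_conjg_gx:
  assumes "psi g = (k, \<lambda>j. (\<one>\<^bsub>F\<^esub>, 0))" "g \<in> carrier F"
  shows "psi (conjg F gx g) = (0, \<lambda>j. gx_coords (j - k))"
  using assms psi_carrier[of g]
  by (auto simp: conjg_def psi_gx FZ.wreath_inv wreath_mult wreath_carrier gx_coords_def
      group_free_group fun_eq_iff)

lemma psi_gy: "psi gy = C_image gy 0 1"
proof -
  have "psi (conjg F gx (gt \<otimes>\<^bsub>F\<^esub> gt)) = (0, \<lambda>j. gx_coords (j - 2))"
    by (rule psi_conjg_gx) (simp_all add: psi_gt wreath_mult)
  moreover have "psi (conjg F gx gt) = (0, \<lambda>j. gx_coords (j - 1))"
    by (rule psi_conjg_gx) (simp_all add: psi_gt)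
  moreover have "conjg F gx (gt \<otimes>\<^bsub>F\<^esub> gt) \<in> carrier F" "conjg F gx gt \<in> carrier F"
    by (simp_all add: conjg_def)
  ultimately have "psi gy =
      (0, \<lambda>j. gx_coords (j - 2) \<otimes>\<^bsub>FZ\<^esub> inv\<^bsub>FZ\<^esub> (gx_coords (j - 1)) \<otimes>\<^bsub>FZ\<^esub> gx_coords j)"
    by (simp add: gy_def psi_gx FZ.wreath_inv_untranslated FZ.wreath_mult_untranslated
        mem_Times_iff gx_coords_def)
  moreover have "gz \<otimes>\<^bsub>F\<^esub> gx = gy"
    by (simp add: gz_def F.m_assoc)
  ultimately show ?thesis
    by (auto simp: C_image_def C_coord_def weight_def gx_coords_def inv_FZ F.int_pow_neg)
qed

lemma inv_C_coord: "g \<in> carrier F \<Longrightarrow> inv\<^bsub>F\<^esub> (C_coord g m n j) = C_coord (inv\<^bsub>F\<^esub> g) (- m) (- n) j"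
  by (simp add: C_coord_def F.int_pow_neg[symmetric])

lemma psi_C_image_inv:
  "g \<in> carrier F \<Longrightarrow> psi g = C_image g m n \<Longrightarrow> psi (inv\<^bsub>F\<^esub> g) = C_image (inv\<^bsub>F\<^esub> g) (- m) (- n)"
  by (simp add: C_image_def FZ.wreath_inv_untranslated inv_FZ C_coord_carrier inv_C_coord
      weight_uminus)

lemma psi_C_image_mult:
  "\<lbrakk>g \<in> carrier F; h \<in> carrier F; psi g = C_image g m n; psi h = C_image h m' n'\<rbrakk>
   \<Longrightarrow> psi (g \<otimes>\<^bsub>F\<^esub> h) = C_image (g \<otimes>\<^bsub>F\<^esub> h) (m + m') (n + n')"
  by (auto simp: C_image_def FZ.wreath_mult_untranslated C_coord_def weight_def
      F.int_pow_mult[symmetric] ac_simps)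

lemma psi_C: "g \<in> C \<Longrightarrow> \<exists>m n. psi g = C_image g m n"
proof -
  have gens: "\<exists>m n. psi g = C_image g m n" if "g \<in> {gx, gy}" for g
  proof -
    have "psi gx = C_image gx 1 0"
      by (auto simp: psi_gx C_image_def C_coord_def weight_def gx_coords_def)
    with that psi_gy show ?thesis
      by auto
  qed
  show "g \<in> C \<Longrightarrow> ?thesis"
    unfolding C_def
  proof (induct g rule: generate.induct)
    case one
    show ?case
      by (intro exI[of _ 0]) (auto simp: C_image_def C_coord_def weight_def wreath_one)
  next
    case (inv g)
    then obtain m n where "psi g = C_image g m n"
      using gens by blast
    with inv have "psi (inv\<^bsub>F\<^esub> g) = C_image (inv\<^bsub>F\<^esub> g) (- m) (- n)"
      using psi_C_image_inv by auto
    then show ?case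
      by blast
  next
    case (eng g h)
    then show ?case
      using psi_C_image_mult C_subset_carrier unfolding C_def by blast
  qed (use gens in auto)
qed

lemma psi_conj_prod:
  assumes hs: "set hs \<subseteq> carrier F" and \<alpha>: "\<alpha> \<in> carrier F" "psi \<alpha> = C_image \<alpha> m n"
  shows "psi (conj_prod F \<alpha> hs) =
    (0, \<lambda>j. (mprod F (map (\<lambda>h. conjg F (C_coord \<alpha> m n (j - shift h)) (coord h (j - shift h))) hs),
             \<Sum>h\<leftarrow>hs. weight m n (j - shift h)))"
proof -
  have "psi (conj_prod F \<alpha> hs) = conj_prod W (C_image \<alpha> m n) (map psi hs)"
    using hs \<alpha> by (simp add: psi.hom_conj_prod)
  also have "\<dots> = (0, \<lambda>j. mprod FZ (map (\<lambda>h. conjg FZ (C_coord \<alpha> m n (j - shift h),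
      weight m n (j - shift h)) (snd (psi h) (j - shift h))) hs))"
    unfolding C_image_def using \<alpha>(1) psi_carrier
    by (subst FZ.wreath_conj_prod_untranslated) (auto simp: C_coord_carrier shift_def comp_def)
  also have "\<dots> = (0, \<lambda>j. (mprod F (map (\<lambda>h. conjg F (C_coord \<alpha> m n (j - shift h))
      (coord h (j - shift h))) hs), \<Sum>h\<leftarrow>hs. weight m n (j - shift h)))"
    using \<alpha>(1) coord_carrier
    by (simp add: conjg_FZ C_coord_carrier coord_def mprod_DirProd mprod_integer_group comp_def)
  finally show ?thesis .
qed

lemma shifts_vanish:
  assumes \<alpha>: "\<alpha> \<in> C" "psi \<alpha> = C_image \<alpha> m n" "(m, n) \<noteq> (0, 0)"
    and hs: "set hs \<subseteq> carrier F" and in_C: "conj_prod F \<alpha> hs \<in> C"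
  shows "\<forall>h\<in>set hs. shift h = 0"
proof -
  obtain m' n' where "psi (conj_prod F \<alpha> hs) = C_image (conj_prod F \<alpha> hs) m' n'"
    using psi_C in_C by blast
  then have weights: "(\<Sum>k\<leftarrow>map shift hs. weight m n (j - k)) = weight m' n' j" for j
    using psi_conj_prod[OF hs _ \<alpha>(2)] \<alpha>(1) C_subset_carrier
    by (auto simp: C_image_def fun_eq_iff comp_def)
  show ?thesis
  proof
    fix h
    assume "h \<in> set hs"
    then show "shift h = 0"
      using shifted_weights_concentrated[OF \<alpha>(3) weights, of "shift h"] by simp
  qed
qed

lemma conj_prod_in_C:
  assumes \<alpha>: "\<alpha> \<in> C" and hs: "set hs \<subseteq> carrier F" and in_C: "conj_prod F \<alpha> hs \<in> C"
  shows "conj_prod F \<alpha> hs = conj_prod F \<alpha> (map (\<lambda>h. coord h 0) (filter (\<lambda>h. shift h = 0) hs))"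
proof -
  have \<alpha>_carrier: "\<alpha> \<in> carrier F"
    using \<alpha> C_subset_carrier by blast
  obtain m n where mn: "psi \<alpha> = C_image \<alpha> m n"
    using psi_C \<alpha> by blast
  obtain m' n' where "psi (conj_prod F \<alpha> hs) = C_image (conj_prod F \<alpha> hs) m' n'"
    using psi_C in_C by blast
  then have "conj_prod F \<alpha> hs = fst (snd (psi (conj_prod F \<alpha> hs)) 0)"
    by (simp add: C_image_def C_coord_def)
  also have "\<dots> =
      mprod F (map (\<lambda>h. conjg F (C_coord \<alpha> m n (0 - shift h)) (coord h (0 - shift h))) hs)"
    by (simp add: psi_conj_prod[OF hs \<alpha>_carrier mn] del: diff_0)
  also have "\<dots> = mprod F (map (\<lambda>h. if shift h = 0 then conjg F \<alpha> (coord h 0) else \<one>\<^bsub>F\<^esub>) hs)"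
  proof (intro arg_cong[where f = "mprod F"] map_cong refl)
    fix h
    assume "h \<in> set hs"
    show "conjg F (C_coord \<alpha> m n (0 - shift h)) (coord h (0 - shift h)) =
        (if shift h = 0 then conjg F \<alpha> (coord h 0) else \<one>\<^bsub>F\<^esub>)"
    proof (cases "shift h = 0")
      case False
      with \<open>h \<in> set hs\<close> have "(m, n) = (0, 0)"
        using shifts_vanish[OF \<alpha> mn _ hs in_C] by auto
      with False show ?thesis
        by (simp add: C_coord_def F.conjg_one coord_carrier)
    qed (simp add: C_coord_def)
  qed
  also have "\<dots> = mprod F (map (\<lambda>h. conjg F \<alpha> (coord h 0)) (filter (\<lambda>h. shift h = 0) hs))"
    by (rule F.mprod_map_if_one) (simp add: F.conjg_closed \<alpha>_carrier coord_carrier)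
  finally show ?thesis
    by (simp add: comp_def)
qed

theorem NSS_inter_C:
  assumes \<alpha>: "\<alpha> \<in> C"
  shows "NSS F (carrier F) {\<alpha>} \<inter> C = NSS F C {\<alpha>}"
proof
  show "NSS F C {\<alpha>} \<subseteq> NSS F (carrier F) {\<alpha>} \<inter> C"
    using NSS_mono[OF C_subset_carrier] F.NSS_subset_subgroup[OF subgroup_C] \<alpha> by blast
next
  have \<alpha>_carrier: "\<alpha> \<in> carrier F"
    using \<alpha> C_subset_carrier by blast
  have in_NSS: "conj_prod F \<alpha> hs \<in> NSS F C {\<alpha>}"
    if "set hs \<subseteq> carrier F" "conj_prod F \<alpha> hs \<in> C" "\<exists>h\<in>set hs. shift h = 0" for hs
  proof -
    let ?cs = "map (\<lambda>h. coord h 0) (filter (\<lambda>h. shift h = 0) hs)"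
    have "?cs \<noteq> []" "set ?cs \<subseteq> C"
      using that(3) coord_in_C by (auto simp: filter_empty_conv)
    then show ?thesis
      unfolding conj_prod_in_C[OF \<alpha> that(1,2)] NSS_singleton by blast
  qed
  show "NSS F (carrier F) {\<alpha>} \<inter> C \<subseteq> NSS F C {\<alpha>}"
  proof
    fix X
    assume "X \<in> NSS F (carrier F) {\<alpha>} \<inter> C"
    then obtain hs where X: "X = conj_prod F \<alpha> hs" "hs \<noteq> []" "set hs \<subseteq> carrier F" "X \<in> C"
      by (auto simp: NSS_singleton)
    show "X \<in> NSS F C {\<alpha>}"
    proof (cases "\<exists>h\<in>set hs. shift h = 0")
      case True
      with in_NSS X show ?thesis
        by blast
    next
      case False
      then have "X = \<one>\<^bsub>F\<^esub>"
        using conj_prod_in_C[OF \<alpha> X(3)] X(1,4) by (simp add: filter_False)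
      txt \<open>Conjugating the trivial product makes one conjugator trivial, hence untranslated.\<close>
      obtain hs' g where "set hs' \<subseteq> carrier F" "\<one>\<^bsub>F\<^esub> \<in> set hs'" "g \<in> carrier F"
        and "conj_prod F \<alpha> hs' = conjg F X g"
        using F.conj_prod_trivial_conjugator[OF \<alpha>_carrier X(3,2)] X(1) by blast
      moreover have "shift \<one>\<^bsub>F\<^esub> = 0"
        by (simp add: shift_def wreath_one)
      ultimately show ?thesis
        using in_NSS[of hs'] X(4) \<open>X = \<one>\<^bsub>F\<^esub>\<close> by (auto simp: F.conjg_one)
    qed
  qed
qed

end

lemma (in group) generate_insert_inv:
  assumes "x \<in> carrier G" "S \<subseteq> carrier G"
  shows "generate G (insert (inv x) S) = generate G (insert x S)"
proof -
  have incl: "generate G (insert (inv y) S) \<subseteq> generate G (insert y S)" if "y \<in> carrier G" for y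
    using that assms(2)
    by (intro generate_subgroup_incl generate_is_subgroup) (auto intro: generate.incl generate.inv)
  show ?thesis
    using incl[of x] incl[of "inv x"] assms(1) by auto
qed

interpretation AB: two_generators a b
  by unfold_locales simp

interpretation CD: two_generators c d
  by unfold_locales simp

theorem mainTheorem20:
  shows "(\<forall>\<alpha> \<in> subC - {\<one>\<^bsub>FA\<^esub>}. NSS FA (carrier FA) {\<alpha>} \<inter> subC = NSS FA subC {\<alpha>})
       \<and> (\<forall>\<beta> \<in> subD - {\<one>\<^bsub>FB\<^esub>}. NSS FB (carrier FB) {\<beta>} \<inter> subD = NSS FB subD {\<beta>})"
proof -
  have C: "subC = AB.C"
    unfolding subC_def AB.C_def AB.gy_def AB.gx_def AB.gt_def ..
  have D: "subD = CD.C"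
    unfolding subD_def CD.C_def CD.gy_def[unfolded CD.gx_def CD.gt_def, symmetric] CD.gx_def
    by (rule group.generate_insert_inv[OF group_free_group]) simp_all
  show ?thesis
    unfolding C D using AB.NSS_inter_C CD.NSS_inter_C by simp
qed

end
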